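(* Let $G$ be an infinite complete metrizable abelian torsion topological group. The following are equivalent: (i) $G$ is not NSS; (ii) $G$ contains a subgroup topologically isomorphic to an infinite product (with the Tychonoff product topology) of finite non-trivial (discrete) groups. In particular, if $G$ is not NSS, then $G$ contains an infinite compact zero-dimensional subgroup.
   Context: A topological group is NSS if it has a neighbourhood of the identity containing no non-trivial subgroup. A torsion group is one in which every element has finite order. *)

theory Defs
  imports "HOL-Analysis.Analysis" "HOL-Algebra.Algebra"
begin

definition topological_group :: "('a, 'b) monoid_scheme \<Rightarrow> 'a topology \<Rightarrow> bool" where
  "topological_group G T \<longleftrightarrow>
     group G \<and> topspace T = carrier G \<and>
     continuous_map (prod_topology T T) T (\<lambda>(x, y). x \<otimes>\<^bsub>G\<^esub> y) \<and>
     continuous_map T T (\<lambda>x. inv\<^bsub>G\<^esub> x)"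

definition NSS :: "('a, 'b) monoid_scheme \<Rightarrow> 'a topology \<Rightarrow> bool" where
  "NSS G T \<longleftrightarrow> (\<exists>U V. openin T V \<and> \<one>\<^bsub>G\<^esub> \<in> V \<and> V \<subseteq> U \<and> U \<subseteq> topspace T \<and>
       (\<forall>H. subgroup H G \<and> H \<subseteq> U \<longrightarrow> H = {\<one>\<^bsub>G\<^esub>}))"

definition torsion_group :: "('a, 'b) monoid_scheme \<Rightarrow> bool" where
  "torsion_group G \<longleftrightarrow> (\<forall>x \<in> carrier G. \<exists>n::nat. n > 0 \<and> x [^]\<^bsub>G\<^esub> n = \<one>\<^bsub>G\<^esub>)"

definition top_iso_to_product ::
  "('a, 'b) monoid_scheme \<Rightarrow> 'a topology \<Rightarrow> 'a set \<Rightarrow> 'i set \<Rightarrow> ('i \<Rightarrow> ('c, 'd) monoid_scheme) \<Rightarrow> bool" where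
  "top_iso_to_product G T S I H \<longleftrightarrow> subgroup S G \<and>
     (\<exists>f. f \<in> hom (product_group I H) G \<and>
          bij_betw f (carrier (product_group I H)) S \<and>
          homeomorphic_map (product_topology (\<lambda>i. discrete_topology (carrier (H i))) I)
                           (subtopology T S) f)"

end

theory Submission
  imports Defs
begin

text \<open>
  Suppose every identity neighbourhood contains a non-trivial subgroup, hence some \<open>x \<noteq> \<one>\<close>
  together with all its powers, of which there are finitely many as G is torsion. Choose inductively \<open>x n \<noteq> \<one>\<close> and identity
  neighbourhoods \<open>V n\<close> such that the powers of \<open>x n\<close> lie in \<open>V (n+1)\<close>, products of two elements
  of \<open>V (n+1)\<close> lie in \<open>V n\<close>, and multiplying by such a product moves each of the finitely many
  elements \<open>x 0 [^] a 0 \<otimes> \<dots> \<otimes> x (n-1) [^] a (n-1)\<close> by less than \<open>2\<^sup>-\<^sup>n\<close> and less than a third of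
  their mutual distances. Then for every \<open>a\<close> in \<open>\<Prod>n. \<int>/ord (x n)\<close> the partial products of
  \<open>\<Prod>n. x n [^] a n\<close> form a Cauchy sequence, and the limit is a continuous injective homomorphism
  (G being abelian) on a compact group, hence a topological isomorphism onto its image.
  Conversely, every identity neighbourhood of an infinite product of non-trivial discrete groups
  contains a subgroup \<open>{\<one>}\<^sup>F \<times> \<Prod>i\<notin>F. H i\<close> with \<open>F\<close> finite, and NSS is inherited along
  injective continuous homomorphisms; such a product is moreover infinite, compact and
  zero-dimensional.
\<close>

section \<open>Element orders and the NSS property\<close>

lemma (in group) nat_pow_eq_iff_mod:
  assumes "x \<in> carrier G"
  shows "x [^] (m::nat) = x [^] n \<longleftrightarrow> m mod ord x = n mod ord x"
proof -
  have "m mod ord x = n mod ord x \<longleftrightarrow> int m mod int (ord x) = int n mod int (ord x)"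
    by (metis of_nat_eq_iff of_nat_mod)
  also have "\<dots> \<longleftrightarrow> int (ord x) dvd int n - int m"
    by (simp add: mod_eq_dvd_iff dvd_diff_commute)
  finally show ?thesis
    using int_pow_eq[OF assms, of "int m" "int n"] by (simp add: int_pow_int)
qed

lemma (in group) nat_pow_mod_ord:
  "x \<in> carrier G \<Longrightarrow> x [^] (n mod ord x) = x [^] n"
  by (simp add: nat_pow_eq_iff_mod)

lemma (in group) finite_range_nat_pow:
  assumes "x \<in> carrier G" "0 < ord x"
  shows "finite (range (\<lambda>n::nat. x [^] n))"
proof -
  have "range (\<lambda>n::nat. x [^] n) = (\<lambda>n. x [^] n) ` {..<ord x}"
    using assms by (auto simp: image_iff nat_pow_mod_ord intro!: bexI[of _ "_ mod ord x"])
  then show ?thesis by simp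
qed

lemma (in group) torsion_group_ord_pos:
  assumes "torsion_group G" "x \<in> carrier G"
  shows "0 < ord x"
proof -
  obtain n :: nat where "0 < n" "x [^] n = \<one>"
    using assms unfolding torsion_group_def by blast
  then show ?thesis
    using pow_eq_id[OF assms(2)] by (metis dvd_0_left_iff gr0I)
qed

lemma not_NSS_imp_nontrivial_powers_in:
  assumes "\<not> NSS G T" "openin T V" "\<one>\<^bsub>G\<^esub> \<in> V"
  obtains x where "x \<in> carrier G" "x \<noteq> \<one>\<^bsub>G\<^esub>" "\<And>n::nat. x [^]\<^bsub>G\<^esub> n \<in> V"
proof -
  have "\<not> (\<forall>H. subgroup H G \<and> H \<subseteq> V \<longrightarrow> H = {\<one>\<^bsub>G\<^esub>})"
    using assms openin_subset unfolding NSS_def by (metis order_refl)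
  then obtain H where H: "subgroup H G" "H \<subseteq> V" "H \<noteq> {\<one>\<^bsub>G\<^esub>}"
    by blast
  then obtain x where x: "x \<in> H" "x \<noteq> \<one>\<^bsub>G\<^esub>"
    using subgroup.one_closed by blast
  have "x [^]\<^bsub>G\<^esub> n \<in> H" for n :: nat
    by (induction n) (simp_all add: x H(1) subgroup.one_closed subgroup.m_closed)
  then show ?thesis
    using that x H subgroup.subset by blast
qed

lemma NSS_pullback:
  assumes "group H" "group G" "f \<in> hom H G" and inj: "inj_on f (carrier H)"
    and cont: "continuous_map TH T f" and top: "topspace TH = carrier H" and "NSS G T"
  shows "NSS H TH"
proof -
  interpret f: group_hom H G f
    using assms by (simp add: group_hom_def group_hom_axioms_def)
  obtain U V where V: "openin T V" "\<one>\<^bsub>G\<^esub> \<in> V" "V \<subseteq> U"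
    and U: "\<And>K. subgroup K G \<Longrightarrow> K \<subseteq> U \<Longrightarrow> K = {\<one>\<^bsub>G\<^esub>}"
    using \<open>NSS G T\<close> unfolding NSS_def by blast
  let ?U = "{y \<in> carrier H. f y \<in> U}" and ?V = "{y \<in> topspace TH. f y \<in> V}"
  have "K = {\<one>\<^bsub>H\<^esub>}" if K: "subgroup K H" "K \<subseteq> ?U" for K
  proof -
    have "f ` K = {\<one>\<^bsub>G\<^esub>}"
      using K U f.subgroup_img_is_subgroup by blast
    have "k = \<one>\<^bsub>H\<^esub>" if k: "k \<in> K" for k
    proof (rule inj_onD[OF inj])
      show "f k = f \<one>\<^bsub>H\<^esub>"
        using \<open>f ` K = {\<one>\<^bsub>G\<^esub>}\<close> k by auto
      show "k \<in> carrier H"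
        using k K(1) subgroup.subset by blast
    qed simp
    then show ?thesis
      using K(1) subgroup.one_closed by blast
  qed
  moreover have "openin TH ?V"
    using cont V(1) by (rule openin_continuous_map_preimage)
  moreover have "\<one>\<^bsub>H\<^esub> \<in> ?V" "?V \<subseteq> ?U" "?U \<subseteq> topspace TH"
    using V top by auto
  ultimately show ?thesis
    unfolding NSS_def by blast
qed

section \<open>Products of discrete groups\<close>

lemma infinite_PiE_nontrivial:
  assumes "infinite I" and nontriv: "\<And>i. i \<in> I \<Longrightarrow> \<exists>a\<in>A i. \<exists>b\<in>A i. a \<noteq> b"
  shows "infinite (PiE I A)"
proof -
  have "\<forall>i\<in>I. A i \<noteq> {}"
    using nontriv by blast
  then obtain x where x: "x \<in> PiE I A"
    by (metis PiE_eq_empty_iff ex_in_conv)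
  have "\<forall>i\<in>I. \<exists>c\<in>A i. c \<noteq> x i"
    using nontriv by metis
  then obtain c where c: "\<And>i. i \<in> I \<Longrightarrow> c i \<in> A i \<and> c i \<noteq> x i"
    by metis
  have "inj_on (\<lambda>i. x(i := c i)) I"
    using c by (intro inj_onI) (metis fun_upd_same fun_upd_apply)
  moreover have "(\<lambda>i. x(i := c i)) ` I \<subseteq> PiE I A"
    using x c by (auto simp: PiE_iff extensional_def)
  ultimately show ?thesis
    using \<open>infinite I\<close> finite_imageD finite_subset by blast
qed

abbreviation discrete_product_topology :: "('i \<Rightarrow> 'c set) \<Rightarrow> 'i set \<Rightarrow> ('i \<Rightarrow> 'c) topology" where
  "discrete_product_topology A I \<equiv> product_topology (\<lambda>i. discrete_topology (A i)) I"

definition cylinder :: "'i set \<Rightarrow> ('i \<Rightarrow> 'c set) \<Rightarrow> 'i set \<Rightarrow> ('i \<Rightarrow> 'c) \<Rightarrow> ('i \<Rightarrow> 'c) set" where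
  "cylinder I A F x = PiE I (\<lambda>i. if i \<in> F then {x i} else A i)"

lemma cylinder_eq:
  assumes "x \<in> PiE I A"
  shows "cylinder I A F x = {y \<in> PiE I A. \<forall>i \<in> I \<inter> F. y i = x i}"
  using assms by (auto simp: cylinder_def PiE_iff extensional_def split: if_split_asm)

lemma openin_cylinder:
  assumes "finite F" "x \<in> PiE I A"
  shows "openin (discrete_product_topology A I) (cylinder I A F x)"
proof -
  have "{i \<in> I. (if i \<in> F then {x i} else A i) \<noteq> A i} \<subseteq> F"
    by auto
  then show ?thesis
    using assms unfolding cylinder_def openin_PiE_gen
    by (auto simp: PiE_iff intro: finite_subset)
qed

lemma closedin_cylinder:
  "x \<in> PiE I A \<Longrightarrow> closedin (discrete_product_topology A I) (cylinder I A F x)"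
  unfolding cylinder_def closedin_product_topology by (auto simp: PiE_iff)

lemma discrete_product_nhds_contains_cylinder:
  assumes "openin (discrete_product_topology A I) W" "x \<in> W"
  obtains F where "finite F" "cylinder I A F x \<subseteq> W"
proof -
  obtain U where fin: "finite {i \<in> I. U i \<noteq> A i}" and x: "x \<in> PiE I U" and UW: "PiE I U \<subseteq> W"
    using assms unfolding openin_product_topology_alt by force
  have "cylinder I A {i \<in> I. U i \<noteq> A i} x \<subseteq> PiE I U"
  proof
    fix y
    assume y: "y \<in> cylinder I A {i \<in> I. U i \<noteq> A i} x"
    show "y \<in> PiE I U"
    proof (rule PiE_I)
      show "y i \<in> U i" if "i \<in> I" for i
      proof -
        have "y i \<in> (if i \<in> {i \<in> I. U i \<noteq> A i} then {x i} else A i)"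
          using y that unfolding cylinder_def by (rule PiE_mem)
        then show ?thesis
          using x that by (cases "U i = A i") auto
      qed
      show "y i = undefined" if "i \<notin> I" for i
        using y that unfolding cylinder_def by (rule PiE_arb)
    qed
  qed
  then show ?thesis
    using that fin UW by blast
qed

lemma discrete_product_dim_le_0: "discrete_product_topology A I dim_le 0"
  unfolding dimension_le_0_neighbourhood_base_of_clopen neighbourhood_base_of
proof (intro allI impI, elim conjE)
  fix W x
  assume W: "openin (discrete_product_topology A I) W" and "x \<in> W"
  then obtain F where F: "finite F" "cylinder I A F x \<subseteq> W"
    by (rule discrete_product_nhds_contains_cylinder)
  have x: "x \<in> PiE I A"
    using W \<open>x \<in> W\<close> openin_subset by fastforce
  then have "x \<in> cylinder I A F x"
    by (simp add: cylinder_eq)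
  then show "\<exists>U V. openin (discrete_product_topology A I) U \<and>
      (closedin (discrete_product_topology A I) V \<and> openin (discrete_product_topology A I) V) \<and>
      x \<in> U \<and> U \<subseteq> V \<and> V \<subseteq> W"
    using F openin_cylinder[OF F(1) x] closedin_cylinder[OF x] by blast
qed

lemma subgroup_cylinder_one:
  assumes "\<And>i. i \<in> I \<Longrightarrow> group (H i)"
  shows "subgroup (cylinder I (\<lambda>i. carrier (H i)) F \<one>\<^bsub>product_group I H\<^esub>) (product_group I H)"
proof -
  have "cylinder I (\<lambda>i. carrier (H i)) F \<one>\<^bsub>product_group I H\<^esub> =
      PiE I (\<lambda>i. if i \<in> F then {\<one>\<^bsub>H i\<^esub>} else carrier (H i))"
    unfolding cylinder_def by (intro PiE_cong) simp
  then show ?thesis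
    using assms by (simp add: PiE_subgroup_product_group group.triv_subgroup group.subgroup_self)
qed

lemma cylinder_one_nontrivial:
  assumes "infinite I" "finite F" and H: "\<And>i. i \<in> I \<Longrightarrow> group (H i)"
    and nontrivial: "\<And>i. i \<in> I \<Longrightarrow> carrier (H i) \<noteq> {\<one>\<^bsub>H i\<^esub>}"
  shows "cylinder I (\<lambda>i. carrier (H i)) F \<one>\<^bsub>product_group I H\<^esub> \<noteq> {\<one>\<^bsub>product_group I H\<^esub>}"
proof
  let ?P = "product_group I H"
  assume triv: "cylinder I (\<lambda>i. carrier (H i)) F \<one>\<^bsub>?P\<^esub> = {\<one>\<^bsub>?P\<^esub>}"
  have "\<not> I \<subseteq> F"
    using assms(1,2) finite_subset by blast
  then obtain i where i: "i \<in> I" "i \<notin> F"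
    by blast
  then have "\<one>\<^bsub>H i\<^esub> \<in> carrier (H i)"
    using H monoid.one_closed[OF group.is_monoid] by blast
  then obtain c where c: "c \<in> carrier (H i)" "c \<noteq> \<one>\<^bsub>H i\<^esub>"
    using nontrivial[OF i(1)] by blast
  have "group ?P"
    using H by simp
  then have "\<one>\<^bsub>?P\<^esub> \<in> PiE I (\<lambda>i. carrier (H i))"
    using monoid.one_closed[OF group.is_monoid] by force
  then have "\<one>\<^bsub>?P\<^esub>(i := c) \<in> cylinder I (\<lambda>i. carrier (H i)) F \<one>\<^bsub>?P\<^esub>"
    using c i by (auto simp: cylinder_eq PiE_iff extensional_def)
  then have "\<one>\<^bsub>?P\<^esub>(i := c) = \<one>\<^bsub>?P\<^esub>"
    using triv by blast
  then have "c = \<one>\<^bsub>?P\<^esub> i"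
    by (metis fun_upd_same)
  then show False
    using c i by simp
qed

lemma not_NSS_discrete_product_group:
  assumes "infinite I" and H: "\<And>i. i \<in> I \<Longrightarrow> group (H i)"
    and nontrivial: "\<And>i. i \<in> I \<Longrightarrow> carrier (H i) \<noteq> {\<one>\<^bsub>H i\<^esub>}"
  shows "\<not> NSS (product_group I H) (discrete_product_topology (\<lambda>i. carrier (H i)) I)"
proof
  let ?P = "product_group I H" and ?A = "\<lambda>i. carrier (H i)"
  assume "NSS ?P (discrete_product_topology ?A I)"
  then obtain U V where V: "openin (discrete_product_topology ?A I) V" "\<one>\<^bsub>?P\<^esub> \<in> V" "V \<subseteq> U"
    and U: "\<And>K. subgroup K ?P \<Longrightarrow> K \<subseteq> U \<Longrightarrow> K = {\<one>\<^bsub>?P\<^esub>}"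
    unfolding NSS_def by blast
  obtain F where "finite F" and FV: "cylinder I ?A F \<one>\<^bsub>?P\<^esub> \<subseteq> V"
    using V(1,2) by (rule discrete_product_nhds_contains_cylinder)
  have "cylinder I ?A F \<one>\<^bsub>?P\<^esub> = {\<one>\<^bsub>?P\<^esub>}"
  proof (rule U)
    show "subgroup (cylinder I ?A F \<one>\<^bsub>?P\<^esub>) ?P"
      using H by (rule subgroup_cylinder_one)
    show "cylinder I ?A F \<one>\<^bsub>?P\<^esub> \<subseteq> U"
      using FV V(3) by (rule subset_trans)
  qed
  then show False
    using cylinder_one_nontrivial[OF \<open>infinite I\<close> \<open>finite F\<close> H nontrivial] by contradiction
qed

lemma top_iso_to_product_imp_not_NSS:
  assumes "group G" "infinite I"
    and H: "\<And>i. i \<in> I \<Longrightarrow> group (H i)" "\<And>i. i \<in> I \<Longrightarrow> carrier (H i) \<noteq> {\<one>\<^bsub>H i\<^esub>}"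
    and "top_iso_to_product G T S I H"
  shows "\<not> NSS G T"
proof
  let ?P = "product_group I H" and ?TP = "discrete_product_topology (\<lambda>i. carrier (H i)) I"
  assume "NSS G T"
  obtain f where f: "f \<in> hom ?P G" "bij_betw f (carrier ?P) S" "homeomorphic_map ?TP (subtopology T S) f"
    using assms(5) unfolding top_iso_to_product_def by blast
  have "continuous_map ?TP T f"
    using f(3) homeomorphic_imp_continuous_map continuous_map_in_subtopology by blast
  then have "NSS ?P ?TP"
    using NSS_pullback[OF _ assms(1) f(1) bij_betw_imp_inj_on[OF f(2)] _ _ \<open>NSS G T\<close>] H by simp
  then show False
    using not_NSS_discrete_product_group[OF assms(2) H] by contradiction
qed

lemma top_iso_to_product_compact_zero_dim:
  assumes "infinite I" and card: "\<And>i. i \<in> I \<Longrightarrow> 1 < card (carrier (H i))"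
    and "top_iso_to_product G T S I H"
  shows "infinite S" "compactin T S" "subtopology T S dim_le 0"
proof -
  let ?P = "product_group I H" and ?TP = "discrete_product_topology (\<lambda>i. carrier (H i)) I"
  obtain f where f: "bij_betw f (carrier ?P) S" "homeomorphic_map ?TP (subtopology T S) f"
    using assms(3) unfolding top_iso_to_product_def by blast
  have finite: "finite (carrier (H i))" if "i \<in> I" for i
    using card[OF that] card_gt_0_iff by fastforce
  have "\<exists>a\<in>carrier (H i). \<exists>b\<in>carrier (H i). a \<noteq> b" if "i \<in> I" for i
    using card[OF that] card_le_Suc0_iff_eq[OF finite[OF that]] by fastforce
  then have "infinite (carrier ?P)"
    using infinite_PiE_nontrivial[OF \<open>infinite I\<close>, of "\<lambda>i. carrier (H i)"] by simp
  then show "infinite S"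
    using f(1) bij_betw_finite by blast
  have "compact_space ?TP"
    using finite by (simp add: compact_space_product_topology compact_space_discrete_topology)
  moreover have "continuous_map ?TP T f"
    using f(2) homeomorphic_imp_continuous_map continuous_map_in_subtopology by blast
  ultimately have "compactin T (f ` topspace ?TP)"
    unfolding compact_space_def by (rule image_compactin)
  then show "compactin T S"
    using f(1) by (simp add: bij_betw_def)
  have "?TP homeomorphic_space subtopology T S"
    using f(2) homeomorphic_map_imp_homeomorphic_space by blast
  then show "subtopology T S dim_le 0"
    by (rule iffD1[OF homeomorphic_space_dimension_le discrete_product_dim_le_0])
qed

section \<open>Infinite products in a complete torsion group that is not NSS\<close>

definition mod_group :: "nat \<Rightarrow> nat monoid" where
  "mod_group k = \<lparr>carrier = {..<k}, mult = (\<lambda>a b. (a + b) mod k), one = 0\<rparr>"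

lemma mod_group_simps [simp]:
  "carrier (mod_group k) = {..<k}" "(\<otimes>\<^bsub>mod_group k\<^esub>) = (\<lambda>a b. (a + b) mod k)"
  "\<one>\<^bsub>mod_group k\<^esub> = 0"
  by (simp_all add: mod_group_def)

lemma group_mod_group:
  assumes "0 < k"
  shows "group (mod_group k)"
proof (rule groupI)
  fix a
  assume a: "a \<in> carrier (mod_group k)"
  have "((k - a) mod k + a) mod k = 0"
    using a by (simp add: mod_add_left_eq)
  then show "\<exists>b\<in>carrier (mod_group k). b \<otimes>\<^bsub>mod_group k\<^esub> a = \<one>\<^bsub>mod_group k\<^esub>"
    using assms by (intro bexI[of _ "(k - a) mod k"]) simp_all
qed (use assms in \<open>simp_all add: mod_add_left_eq mod_add_right_eq add.assoc\<close>)

lemma (in Metric_space) finite_imp_separated: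
  assumes "finite F" "F \<subseteq> M"
  obtains \<delta> where "0 < \<delta>" "\<And>a b. a \<in> F \<Longrightarrow> b \<in> F \<Longrightarrow> a \<noteq> b \<Longrightarrow> \<delta> \<le> d a b"
proof -
  let ?D = "insert 1 ((\<lambda>(a, b). d a b) ` (F \<times> F - Id))"
  have "finite ?D"
    using assms by simp
  moreover have "0 < Min ?D"
    using assms \<open>finite ?D\<close> by (auto simp: Min_gr_iff intro: mdist_pos_less)
  ultimately show ?thesis
    by (intro that[of "Min ?D"]) (auto intro!: Min_le)
qed

locale complete_torsion_group = Metric_space M d + comm_group G
  for M :: "'a set" and d and G :: "('a, 'b) monoid_scheme" (structure) +
  assumes carrier_eq: "carrier G = M"
    and complete: "mcomplete"
    and continuous_mult: "continuous_map (prod_topology mtopology mtopology) mtopology (\<lambda>(x, y). x \<otimes> y)"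
    and torsion: "torsion_group G"
begin

lemma continuous_map_left_mult:
  assumes "g \<in> M"
  shows "continuous_map mtopology mtopology (\<lambda>w. g \<otimes> w)"
proof -
  have "continuous_map mtopology (prod_topology mtopology mtopology) (\<lambda>w. (g, w))"
    using assms by (intro continuous_map_pairedI) auto
  then have "continuous_map mtopology mtopology ((\<lambda>(x, y). x \<otimes> y) \<circ> (\<lambda>w. (g, w)))"
    using continuous_mult by (rule continuous_map_compose)
  then show ?thesis
    by (simp add: o_def)
qed

lemma openin_small_shifts:
  assumes "finite F" "F \<subseteq> M"
  shows "openin mtopology {w \<in> M. \<forall>g\<in>F. d g (g \<otimes> w) < \<epsilon>}"
proof -
  have "openin mtopology ((\<Inter>g\<in>F. {w \<in> topspace mtopology. g \<otimes> w \<in> mball g \<epsilon>}) \<inter> topspace mtopology)"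
  proof (rule openin_INT[OF assms(1)])
    fix g
    assume "g \<in> F"
    then show "openin mtopology {w \<in> topspace mtopology. g \<otimes> w \<in> mball g \<epsilon>}"
      using assms(2) continuous_map_left_mult openin_continuous_map_preimage openin_mball by blast
  qed
  moreover have "(\<Inter>g\<in>F. {w \<in> topspace mtopology. g \<otimes> w \<in> mball g \<epsilon>}) \<inter> topspace mtopology =
      {w \<in> M. \<forall>g\<in>F. d g (g \<otimes> w) < \<epsilon>}"
    using assms(2) carrier_eq by auto
  ultimately show ?thesis
    by simp
qed

lemma exists_nbhd_square_subset:
  assumes "openin mtopology Q" "\<one> \<in> Q"
  obtains V where "openin mtopology V" "\<one> \<in> V" "\<And>a b. a \<in> V \<Longrightarrow> b \<in> V \<Longrightarrow> a \<otimes> b \<in> Q"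
proof -
  let ?P = "{z \<in> topspace (prod_topology mtopology mtopology). (\<lambda>(x, y). x \<otimes> y) z \<in> Q}"
  have "openin (prod_topology mtopology mtopology) ?P"
    using continuous_mult assms(1) by (rule openin_continuous_map_preimage)
  moreover have "(\<one>, \<one>) \<in> ?P"
    using assms(2) carrier_eq by auto
  ultimately obtain U V where "openin mtopology U" "openin mtopology V" "\<one> \<in> U" "\<one> \<in> V" "U \<times> V \<subseteq> ?P"
    unfolding openin_prod_topology_alt by meson
  then show ?thesis
    by (intro that[of "U \<inter> V"]) auto
qed

lemma ord_pos: "y \<in> carrier G \<Longrightarrow> 0 < ord y"
  using torsion by (rule torsion_group_ord_pos)

lemma finite_mult_powers:
  assumes "finite F" "y \<in> carrier G"
  shows "finite {g \<otimes> y [^] j | g (j::nat). g \<in> F}"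
proof -
  have "{g \<otimes> y [^] j | g (j::nat). g \<in> F} = (\<lambda>(g, z). g \<otimes> z) ` (F \<times> range (\<lambda>j::nat. y [^] j))"
    by auto
  then show ?thesis
    using assms finite_range_nat_pow[OF assms(2) ord_pos[OF assms(2)]] by simp
qed

lemma subset_mult_powers: "F \<subseteq> carrier G \<Longrightarrow> F \<subseteq> {g \<otimes> y [^] j | g (j::nat). g \<in> F}"
  by (force intro: exI[of _ "0::nat"])

lemma nss_sequence_step:
  assumes "\<not> NSS G mtopology" "finite F" "F \<subseteq> M" "openin mtopology V" "\<one> \<in> V"
  obtains y V' e where "y \<in> carrier G" "y \<noteq> \<one>" "\<And>j::nat. y [^] j \<in> V'"
    "openin mtopology V'" "\<one> \<in> V'" "\<And>a b. a \<in> V' \<Longrightarrow> b \<in> V' \<Longrightarrow> a \<otimes> b \<in> V"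
    "\<And>a b g. a \<in> V' \<Longrightarrow> b \<in> V' \<Longrightarrow> g \<in> F \<Longrightarrow> d g (g \<otimes> (a \<otimes> b)) < e"
    "0 < e" "e \<le> (1/2)^n" "\<And>g h. g \<in> F \<Longrightarrow> h \<in> F \<Longrightarrow> g \<noteq> h \<Longrightarrow> 3 * e \<le> d g h"
proof -
  obtain \<delta> where \<delta>: "0 < \<delta>" "\<And>g h. g \<in> F \<Longrightarrow> h \<in> F \<Longrightarrow> g \<noteq> h \<Longrightarrow> \<delta> \<le> d g h"
    using finite_imp_separated[OF assms(2,3)] by blast
  define e :: real where "e = min ((1/2)^n) (\<delta>/3)"
  have e: "0 < e" "e \<le> (1/2)^n" "\<And>g h. g \<in> F \<Longrightarrow> h \<in> F \<Longrightarrow> g \<noteq> h \<Longrightarrow> 3 * e \<le> d g h"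
    using \<delta> by (force simp: e_def)+
  let ?W = "V \<inter> {w \<in> M. \<forall>g\<in>F. d g (g \<otimes> w) < e}"
  have "openin mtopology ?W"
    using assms(2-4) openin_small_shifts by blast
  moreover have "\<one> \<in> ?W"
    using assms(3,5) carrier_eq e(1) by auto
  ultimately obtain V' where V': "openin mtopology V'" "\<one> \<in> V'"
    "\<And>a b. a \<in> V' \<Longrightarrow> b \<in> V' \<Longrightarrow> a \<otimes> b \<in> ?W"
    by (rule exists_nbhd_square_subset) blast
  obtain y where "y \<in> carrier G" "y \<noteq> \<one>" "\<And>j::nat. y [^] j \<in> V'"
    using not_NSS_imp_nontrivial_powers_in[OF assms(1) V'(1,2)] by blast
  then show ?thesis
    using V' e by (intro that[of y V' e]) auto
qed

end

text \<open>
  A tail \<open>x n [^] a\<^sub>n \<otimes> x (n + 1) [^] a\<^sub>n\<^sub>+\<^sub>1 \<otimes> \<dots>\<close> lies in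
  \<open>V n\<close>, and if it is non-empty it moves every element of \<open>F n\<close> by less than \<open>\<epsilon> n\<close>, a third of the
  distance between distinct elements of \<open>F n\<close>.
\<close>

locale nss_sequence = complete_torsion_group +
  fixes x :: "nat \<Rightarrow> 'a" and V F :: "nat \<Rightarrow> 'a set" and \<epsilon> :: "nat \<Rightarrow> real"
  assumes one_in_F0: "\<one> \<in> F 0"
    and F_Suc: "F (Suc n) = {g \<otimes> x n [^] j | g (j::nat). g \<in> F n}"
    and x_in_carrier: "x n \<in> carrier G"
    and x_neq_one: "x n \<noteq> \<one>"
    and x_pow_in_V: "x n [^] (j::nat) \<in> V (Suc n)"
    and one_in_V: "\<one> \<in> V n"
    and V_mult: "a \<in> V (Suc n) \<Longrightarrow> b \<in> V (Suc n) \<Longrightarrow> a \<otimes> b \<in> V n"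
    and V_mult_shift: "a \<in> V (Suc n) \<Longrightarrow> b \<in> V (Suc n) \<Longrightarrow> g \<in> F n \<Longrightarrow> d g (g \<otimes> (a \<otimes> b)) < \<epsilon> n"
    and \<epsilon>_pos: "0 < \<epsilon> n"
    and \<epsilon>_le: "\<epsilon> n \<le> (1/2)^n"
    and F_separated: "g \<in> F n \<Longrightarrow> h \<in> F n \<Longrightarrow> g \<noteq> h \<Longrightarrow> 3 * \<epsilon> n \<le> d g h"

lemma (in complete_torsion_group) not_NSS_imp_nss_sequence:
  assumes "\<not> NSS G mtopology"
  obtains x V F \<epsilon> where "nss_sequence M d G x V F \<epsilon>"
proof -
  define P where "P s \<longleftrightarrow>
    finite (fst s) \<and> \<one> \<in> fst s \<and> fst s \<subseteq> M \<and> openin mtopology (snd s) \<and> \<one> \<in> snd s"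
    for s :: "'a set \<times> 'a set"
  define R where "R n s s' y e \<longleftrightarrow> y \<in> carrier G \<and> y \<noteq> \<one> \<and> (\<forall>j::nat. y [^] j \<in> snd s') \<and>
      fst s' = {g \<otimes> y [^] j | g (j::nat). g \<in> fst s} \<and>
      (\<forall>a\<in>snd s'. \<forall>b\<in>snd s'. a \<otimes> b \<in> snd s \<and> (\<forall>g\<in>fst s. d g (g \<otimes> (a \<otimes> b)) < e)) \<and>
      0 < e \<and> e \<le> (1/2)^n \<and> (\<forall>g\<in>fst s. \<forall>h\<in>fst s. g \<noteq> h \<longrightarrow> 3 * e \<le> d g h)"
    for n :: nat and s s' :: "'a set \<times> 'a set" and y e
  have "P ({\<one>}, M)"
    using carrier_eq by (auto simp: P_def)
  moreover have "\<exists>s'. P s' \<and> (\<exists>y e. R n s s' y e)" if "P s" for n s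
  proof -
    have s: "finite (fst s)" "fst s \<subseteq> M" "openin mtopology (snd s)" "\<one> \<in> snd s" "\<one> \<in> fst s"
      using that by (simp_all add: P_def)
    obtain y V' e where y: "y \<in> carrier G" "y \<noteq> \<one>" "\<And>j::nat. y [^] j \<in> V'"
      and V': "openin mtopology V'" "\<one> \<in> V'" "\<And>a b. a \<in> V' \<Longrightarrow> b \<in> V' \<Longrightarrow> a \<otimes> b \<in> snd s"
        "\<And>a b g. a \<in> V' \<Longrightarrow> b \<in> V' \<Longrightarrow> g \<in> fst s \<Longrightarrow> d g (g \<otimes> (a \<otimes> b)) < e"
      and e: "0 < e" "e \<le> (1/2)^n" "\<And>g h. g \<in> fst s \<Longrightarrow> h \<in> fst s \<Longrightarrow> g \<noteq> h \<Longrightarrow> 3 * e \<le> d g h"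
      by (rule nss_sequence_step[OF assms s(1-4)]) blast
    let ?F' = "{g \<otimes> y [^] j | g (j::nat). g \<in> fst s}"
    have "P (?F', V')"
      using finite_mult_powers[OF s(1) y(1)] subset_mult_powers[of "fst s" y] s(2,5) y(1) V'(1,2) carrier_eq
      unfolding P_def by auto
    moreover have "R n s (?F', V') y e"
      unfolding R_def using y V' e by auto
    ultimately show ?thesis
      by blast
  qed
  ultimately obtain s where s: "\<And>n. P (s n)" "\<And>n. \<exists>y e. R n (s n) (s (Suc n)) y e"
    using dependent_nat_choice[of "\<lambda>_. P" "\<lambda>n s s'. \<exists>y e. R n s s' y e"] by blast
  then obtain x \<epsilon> where "\<And>n. R n (s n) (s (Suc n)) (x n) (\<epsilon> n)"
    by metis
  then have "nss_sequence M d G x (snd \<circ> s) (fst \<circ> s) \<epsilon>"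
    using s(1) unfolding P_def R_def
    by unfold_locales simp_all
  then show ?thesis
    by (rule that)
qed

context nss_sequence
begin

primrec seg_prod :: "(nat \<Rightarrow> nat) \<Rightarrow> nat \<Rightarrow> nat \<Rightarrow> 'a" where
  "seg_prod a n 0 = \<one>"
| "seg_prod a n (Suc j) = x n [^] a n \<otimes> seg_prod a (Suc n) j"

lemma seg_prod_closed [simp]: "seg_prod a n j \<in> carrier G"
  by (induction j arbitrary: n) (simp_all add: x_in_carrier)

lemma seg_prod_in_M [simp]: "seg_prod a n j \<in> M"
  using carrier_eq by auto

lemma seg_prod_add: "seg_prod a n (k + j) = seg_prod a n k \<otimes> seg_prod a (n + k) j"
  by (induction k arbitrary: n) (simp_all add: x_in_carrier m_assoc)

lemma seg_prod_Suc_right: "seg_prod a 0 (Suc m) = seg_prod a 0 m \<otimes> x m [^] a m"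
  using seg_prod_add[of a 0 m 1] by (simp add: x_in_carrier)

lemma seg_prod_in_F: "seg_prod a 0 m \<in> F m"
proof (induction m)
  case 0
  show ?case
    by (simp add: one_in_F0)
next
  case (Suc m)
  then show ?case
    unfolding F_Suc seg_prod_Suc_right by blast
qed

lemma seg_prod_cong:
  "(\<And>i. n \<le> i \<Longrightarrow> i < n + j \<Longrightarrow> a i = b i) \<Longrightarrow> seg_prod a n j = seg_prod b n j"
  by (induction j arbitrary: n) auto

lemma seg_prod_in_V: "seg_prod a n j \<in> V n"
proof (induction j arbitrary: n)
  case 0
  show ?case
    by (simp add: one_in_V)
next
  case (Suc j)
  show ?case
    using V_mult[OF x_pow_in_V Suc.IH] by simp
qed

lemma seg_prod_shift: "0 < j \<Longrightarrow> g \<in> F n \<Longrightarrow> d g (g \<otimes> seg_prod a n j) < \<epsilon> n"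
  by (cases j) (simp_all add: V_mult_shift x_pow_in_V seg_prod_in_V)

lemma dist_seg_prod:
  assumes "n \<le> m"
  shows "d (seg_prod a 0 n) (seg_prod a 0 m) \<le> \<epsilon> n"
proof -
  obtain j where m: "m = n + j"
    using assms le_Suc_ex by blast
  show ?thesis
  proof (cases "j = 0")
    case True
    then show ?thesis
      using \<epsilon>_pos[of n] m by simp
  next
    case False
    then have "d (seg_prod a 0 n) (seg_prod a 0 n \<otimes> seg_prod a n j) < \<epsilon> n"
      using seg_prod_shift seg_prod_in_F by blast
    then show ?thesis
      using m seg_prod_add[of a 0 n j] by simp
  qed
qed

lemma MCauchy_seg_prod: "MCauchy (seg_prod a 0)"
  unfolding MCauchy_def
proof (intro conjI allI impI)
  show "range (seg_prod a 0) \<subseteq> M"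
    by auto
  fix r :: real
  assume "0 < r"
  then obtain N where N: "(1/2::real)^N < r/2"
    using real_arch_pow_inv[of "r/2" "1/2"] by auto
  show "\<exists>N. \<forall>n n'. N \<le> n \<longrightarrow> N \<le> n' \<longrightarrow> d (seg_prod a 0 n) (seg_prod a 0 n') < r"
  proof (intro exI allI impI)
    fix n n'
    assume "N \<le> n" "N \<le> n'"
    then have "d (seg_prod a 0 N) (seg_prod a 0 n) \<le> (1/2)^N" "d (seg_prod a 0 N) (seg_prod a 0 n') \<le> (1/2)^N"
      using dist_seg_prod \<epsilon>_le order_trans by blast+
    moreover have "d (seg_prod a 0 n) (seg_prod a 0 n') \<le> d (seg_prod a 0 N) (seg_prod a 0 n) + d (seg_prod a 0 N) (seg_prod a 0 n')"
      by (simp add: triangle'')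
    ultimately show "d (seg_prod a 0 n) (seg_prod a 0 n') < r"
      using N by linarith
  qed
qed

definition lim_prod :: "(nat \<Rightarrow> nat) \<Rightarrow> 'a" where
  "lim_prod a = (SOME l. limitin mtopology (seg_prod a 0) l sequentially)"

lemma limitin_lim_prod: "limitin mtopology (seg_prod a 0) (lim_prod a) sequentially"
proof -
  have "\<exists>l. limitin mtopology (seg_prod a 0) l sequentially"
    using complete MCauchy_seg_prod unfolding mcomplete_def by blast
  then show ?thesis
    unfolding lim_prod_def by (rule someI_ex)
qed

lemma lim_prod_in_M: "lim_prod a \<in> M"
  using limitin_lim_prod by (rule limitin_mspace)

lemma dist_lim_prod: "d (seg_prod a 0 n) (lim_prod a) \<le> \<epsilon> n"
proof -
  have "eventually (\<lambda>m. seg_prod a 0 m \<in> mcball (seg_prod a 0 n) (\<epsilon> n)) sequentially"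
    unfolding eventually_sequentially using dist_seg_prod by auto
  then have "lim_prod a \<in> mcball (seg_prod a 0 n) (\<epsilon> n)"
    by (rule limitin_closedin[OF limitin_lim_prod closedin_mcball]) simp
  then show ?thesis
    by (simp add: lim_prod_in_M)
qed

lemma dist_lim_prod_agree:
  assumes "\<And>i. i < N \<Longrightarrow> a i = b i"
  shows "d (lim_prod a) (lim_prod b) \<le> 2 * \<epsilon> N"
proof -
  have "seg_prod a 0 N = seg_prod b 0 N"
    using assms by (intro seg_prod_cong) simp
  then have "d (lim_prod a) (lim_prod b) \<le> d (seg_prod a 0 N) (lim_prod a) + d (seg_prod b 0 N) (lim_prod b)"
    using triangle''[OF lim_prod_in_M _ lim_prod_in_M] by simp
  then show ?thesis
    using dist_lim_prod[of a N] dist_lim_prod[of b N] by linarith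
qed

lemma one_less_ord_x: "1 < ord (x n)"
proof -
  have "ord (x n) \<noteq> 1"
    using ord_eq_1 x_in_carrier x_neq_one by blast
  then show ?thesis
    using ord_pos[OF x_in_carrier, of n] by linarith
qed

lemma seg_prod_mult:
  "seg_prod (\<lambda>i. (a i + b i) mod ord (x i)) n j = seg_prod a n j \<otimes> seg_prod b n j"
proof (induction j arbitrary: n)
  case 0
  show ?case
    by simp
next
  case (Suc j)
  have "x n [^] ((a n + b n) mod ord (x n)) = x n [^] a n \<otimes> x n [^] b n"
    by (simp add: nat_pow_mod_ord nat_pow_mult x_in_carrier)
  then have "seg_prod (\<lambda>i. (a i + b i) mod ord (x i)) n (Suc j) =
      (x n [^] a n \<otimes> x n [^] b n) \<otimes> (seg_prod a (Suc n) j \<otimes> seg_prod b (Suc n) j)"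
    using Suc.IH by simp
  also have "\<dots> = seg_prod a n (Suc j) \<otimes> seg_prod b n (Suc j)"
    by (simp add: m_assoc m_lcomm x_in_carrier)
  finally show ?case .
qed

lemma lim_prod_mult: "lim_prod (\<lambda>i. (a i + b i) mod ord (x i)) = lim_prod a \<otimes> lim_prod b"
proof -
  have "limitin (prod_topology mtopology mtopology) (\<lambda>m. (seg_prod a 0 m, seg_prod b 0 m))
      (lim_prod a, lim_prod b) sequentially"
    unfolding limitin_pairwise using limitin_lim_prod by (simp add: o_def)
  from continuous_map_limit[OF continuous_mult this]
  have "limitin mtopology (\<lambda>m. seg_prod a 0 m \<otimes> seg_prod b 0 m) (lim_prod a \<otimes> lim_prod b) sequentially"
    by (simp add: o_def)
  moreover have "seg_prod (\<lambda>i. (a i + b i) mod ord (x i)) 0 = (\<lambda>m. seg_prod a 0 m \<otimes> seg_prod b 0 m)"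
    by (simp add: fun_eq_iff seg_prod_mult)
  ultimately show ?thesis
    by (intro limitin_metric_unique[OF limitin_lim_prod _ trivial_limit_sequentially]) simp
qed

lemma lim_prod_inj:
  assumes a: "\<And>i. a i < ord (x i)" and b: "\<And>i. b i < ord (x i)" and "a \<noteq> b"
  shows "lim_prod a \<noteq> lim_prod b"
proof
  assume eq: "lim_prod a = lim_prod b"
  define n where "n = (LEAST i. a i \<noteq> b i)"
  have "\<exists>i. a i \<noteq> b i"
    using \<open>a \<noteq> b\<close> by auto
  then have "a n \<noteq> b n"
    unfolding n_def by (rule LeastI_ex)
  have "a i = b i" if "i < n" for i
    using not_less_Least[OF that[unfolded n_def]] by blast
  then have "seg_prod a 0 n = seg_prod b 0 n"
    by (intro seg_prod_cong) simp
  moreover have "x n [^] a n \<noteq> x n [^] b n"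
    using \<open>a n \<noteq> b n\<close> a[of n] b[of n] by (simp add: nat_pow_eq_iff_mod x_in_carrier)
  ultimately have "seg_prod a 0 (Suc n) \<noteq> seg_prod b 0 (Suc n)"
    unfolding seg_prod_Suc_right by (simp add: l_cancel x_in_carrier)
  then have "3 * \<epsilon> (Suc n) \<le> d (seg_prod a 0 (Suc n)) (seg_prod b 0 (Suc n))"
    by (intro F_separated seg_prod_in_F)
  also have "\<dots> \<le> d (seg_prod a 0 (Suc n)) (lim_prod a) + d (seg_prod b 0 (Suc n)) (lim_prod b)"
    unfolding eq by (intro triangle' seg_prod_in_M lim_prod_in_M)
  also have "\<dots> \<le> 2 * \<epsilon> (Suc n)"
    using dist_lim_prod[of a "Suc n"] dist_lim_prod[of b "Suc n"] by linarith
  finally show False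
    using \<epsilon>_pos[of "Suc n"] by linarith
qed

lemma continuous_map_lim_prod:
  "continuous_map (discrete_product_topology (\<lambda>n. {..<ord (x n)}) UNIV) mtopology lim_prod"
  unfolding continuous_map_to_metric
proof (intro ballI allI impI)
  fix a and r :: real
  assume "a \<in> topspace (discrete_product_topology (\<lambda>n. {..<ord (x n)}) UNIV)" and "0 < r"
  then have a: "a \<in> PiE UNIV (\<lambda>n. {..<ord (x n)})"
    by simp
  obtain N where N: "(1/2::real)^N < r/2"
    using real_arch_pow_inv[of "r/2" "1/2"] \<open>0 < r\<close> by auto
  let ?U = "cylinder UNIV (\<lambda>n. {..<ord (x n)}) {..<N} a"
  have "lim_prod b \<in> mball (lim_prod a) r" if "b \<in> ?U" for b
  proof -
    have "d (lim_prod a) (lim_prod b) \<le> 2 * \<epsilon> N"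
      using that a by (intro dist_lim_prod_agree) (simp add: cylinder_eq)
    then show ?thesis
      using \<epsilon>_le[of N] N by (simp add: lim_prod_in_M)
  qed
  moreover have "openin (discrete_product_topology (\<lambda>n. {..<ord (x n)}) UNIV) ?U"
    using a by (intro openin_cylinder) simp_all
  moreover have "a \<in> ?U"
    using a by (simp add: cylinder_eq)
  ultimately show "\<exists>U. openin (discrete_product_topology (\<lambda>n. {..<ord (x n)}) UNIV) U \<and> a \<in> U \<and>
      (\<forall>b\<in>U. lim_prod b \<in> mball (lim_prod a) r)"
    by blast
qed

abbreviation cyclic_factor :: "nat \<Rightarrow> nat monoid" where
  "cyclic_factor n \<equiv> mod_group (ord (x n))"

lemma group_cyclic_factor: "group (cyclic_factor n)"
  using ord_pos[OF x_in_carrier] by (simp add: group_mod_group)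

lemma lim_prod_hom: "lim_prod \<in> hom (product_group UNIV cyclic_factor) G"
proof (rule homI)
  show "lim_prod a \<in> carrier G" for a
    using lim_prod_in_M carrier_eq by simp
  show "lim_prod (a \<otimes>\<^bsub>product_group UNIV cyclic_factor\<^esub> b) = lim_prod a \<otimes> lim_prod b" for a b
    by (simp add: restrict_UNIV lim_prod_mult)
qed

lemma inj_on_lim_prod: "inj_on lim_prod (carrier (product_group UNIV cyclic_factor))"
  using lim_prod_inj by (intro inj_onI) (auto simp: PiE_iff)

lemma top_iso_to_product_lim_prod:
  "top_iso_to_product G mtopology (lim_prod ` carrier (product_group UNIV cyclic_factor)) UNIV cyclic_factor"
proof -
  let ?P = "product_group UNIV cyclic_factor"
    and ?TP = "discrete_product_topology (\<lambda>n. carrier (cyclic_factor n)) UNIV"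
  interpret lim: group_hom ?P G lim_prod
    using group_cyclic_factor is_group lim_prod_hom by (simp add: group_hom_def group_hom_axioms_def)
  have "homeomorphic_map ?TP (subtopology mtopology (lim_prod ` carrier ?P)) lim_prod"
  proof (rule continuous_imp_homeomorphic_map)
    show "continuous_map ?TP (subtopology mtopology (lim_prod ` carrier ?P)) lim_prod"
      using continuous_map_lim_prod by (simp add: continuous_map_in_subtopology)
    show "compact_space ?TP"
      by (simp add: compact_space_product_topology compact_space_discrete_topology)
    show "Hausdorff_space (subtopology mtopology (lim_prod ` carrier ?P))"
      by (simp add: Hausdorff_space_subtopology Hausdorff_space_mtopology)
    show "lim_prod ` topspace ?TP = topspace (subtopology mtopology (lim_prod ` carrier ?P))"
      using lim_prod_in_M by auto
    show "inj_on lim_prod (topspace ?TP)"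
      using inj_on_lim_prod by simp
  qed
  then show ?thesis
    unfolding top_iso_to_product_def bij_betw_def
    using lim.img_is_subgroup lim_prod_hom inj_on_lim_prod by blast
qed

end

lemma (in complete_torsion_group) not_NSS_imp_top_iso_to_product:
  assumes "\<not> NSS G mtopology"
  shows "\<exists>(H :: nat \<Rightarrow> nat monoid) S.
    (\<forall>n. group (H n) \<and> finite (carrier (H n)) \<and> card (carrier (H n)) > 1) \<and>
    top_iso_to_product G mtopology S UNIV H"
proof -
  obtain x V F \<epsilon> where "nss_sequence M d G x V F \<epsilon>"
    using not_NSS_imp_nss_sequence[OF assms] .
  then interpret nss_sequence M d G x V F \<epsilon> .
  show ?thesis
    using group_cyclic_factor one_less_ord_x top_iso_to_product_lim_prod
    by (intro exI conjI allI) simp_all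
qed

lemma complete_torsion_groupI:
  assumes "topological_group G T" "comm_group G" "torsion_group G"
    and "Metric_space M d" "Metric_space.mcomplete M d" "T = Metric_space.mtopology M d"
  shows "complete_torsion_group M d G"
proof -
  have "carrier G = M"
    using assms(1,6) Metric_space.topspace_mtopology[OF assms(4)] unfolding topological_group_def by simp
  then show ?thesis
    using assms unfolding complete_torsion_group_def complete_torsion_group_axioms_def topological_group_def
    by blast
qed

theorem theorem8p5:
  fixes G :: "('a, 'b) monoid_scheme" and T :: "'a topology"
  assumes "topological_group G T"
    and "comm_group G"
    and "torsion_group G"
    and "infinite (carrier G)"
    and "completely_metrizable_space T"
  shows "(\<not> NSS G T \<longleftrightarrow>
            (\<exists>(H :: nat \<Rightarrow> nat monoid) S.
               (\<forall>n. group (H n) \<and> finite (carrier (H n)) \<and> card (carrier (H n)) > 1) \<and>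
               top_iso_to_product G T S UNIV H))
       \<and> (\<not> NSS G T \<longrightarrow>
            (\<exists>K. subgroup K G \<and> infinite K \<and> compactin T K \<and> subtopology T K dim_le 0))"
proof -
  obtain M d where "Metric_space M d" "Metric_space.mcomplete M d" and T: "T = Metric_space.mtopology M d"
    using assms(5) unfolding completely_metrizable_space_def by blast
  then interpret complete_torsion_group M d G
    using assms(1-3) by (intro complete_torsion_groupI)
  have not_NSS_compact: "\<not> NSS G T \<and> (\<exists>K. subgroup K G \<and> infinite K \<and> compactin T K \<and> subtopology T K dim_le 0)"
    if H: "\<forall>n. group (H n) \<and> finite (carrier (H n)) \<and> card (carrier (H n)) > 1"
      and iso: "top_iso_to_product G T S UNIV H" for H :: "nat \<Rightarrow> nat monoid" and S
  proof -
    have "group (H n)" "carrier (H n) \<noteq> {\<one>\<^bsub>H n\<^esub>}" "1 < card (carrier (H n))" for n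
      using H[THEN spec, of n] by auto
    then have "\<not> NSS G T" "infinite S" "compactin T S" "subtopology T S dim_le 0"
      using top_iso_to_product_imp_not_NSS[OF is_group infinite_UNIV_nat _ _ iso]
        top_iso_to_product_compact_zero_dim[OF infinite_UNIV_nat _ iso] by blast+
    moreover have "subgroup S G"
      using iso by (simp add: top_iso_to_product_def)
    ultimately show ?thesis
      by blast
  qed
  show ?thesis
    using not_NSS_compact not_NSS_imp_top_iso_to_product unfolding T by blast
qed

end
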